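(* For every integer $k\ge 0$, $$\sum_{i=1}^{2^{k}}B_i(t)=\frac{1}{2}\bigl((t+2)^{k}+t^{k}\bigr).$$
   Context: The Stern polynomials $B_n(t)\in\mathbb{Z}[t]$, $n\ge 0$, are defined by $B_0(t)=0$, $B_1(t)=1$, $B_{2n}(t)=tB_n(t)$ and $B_{2n+1}(t)=B_n(t)+B_{n+1}(t)$ for $n\ge 1$. *)

theory Defs
  imports "HOL-Computational_Algebra.Polynomial"
begin

function stern_poly :: "nat \<Rightarrow> int poly" where
  "stern_poly n =
     (if n = 0 then 0
      else if n = 1 then 1
      else if even n then [:0, 1:] * stern_poly (n div 2)
      else stern_poly (n div 2) + stern_poly (n div 2 + 1))"
  by pat_completeness auto
termination
  by (relation "measure id") (auto elim: oddE)

end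

theory Submission
  imports Defs
begin

(* Write S(n) = B_1 + ... + B_n for the partial sums of the Stern polynomials.
   The proof rests on a doubling identity for these sums: grouping the terms
   B_(2j+1) + B_(2j+2) = B_j + B_(j+1) + t B_(j+1) gives
     S(2n) = (t+2) S(n) - B_n.
   Since B_(2^k) = t^k, taking n = 2^k yields the recursion
     S(2^(k+1)) = (t+2) S(2^k) - t^k,  S(1) = 1,
   and induction on k shows that 2 S(2^k) = (t+2)^k + t^k. *)

declare stern_poly.simps[simp del]

lemma stern_poly_0 [simp]: "stern_poly 0 = 0"
  by (simp add: stern_poly.simps)

lemma stern_poly_1 [simp]: "stern_poly (Suc 0) = 1"
  by (simp add: stern_poly.simps)

lemma stern_poly_even: "n > 0 \<Longrightarrow> stern_poly (2 * n) = [:0, 1:] * stern_poly n"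
  by (subst stern_poly.simps) auto

(* The odd case also holds for n = 0, since B_1 = B_0 + B_1. *)
lemma stern_poly_odd: "stern_poly (2 * n + 1) = stern_poly n + stern_poly (n + 1)"
  by (cases "n = 0") (subst stern_poly.simps, simp)+

lemma stern_poly_power_of_two: "stern_poly (2 ^ k) = [:0, 1:] ^ k"
proof (induction k)
  case (Suc k)
  have "stern_poly (2 ^ Suc k) = [:0, 1:] * stern_poly (2 ^ k)"
    using stern_poly_even[of "2 ^ k"] by simp
  with Suc show ?case by simp
qed simp

(* Doubling identity for partial sums: S(2n) = (t+2) S(n) - B_n.
   Passing from n to n+1 adds B_(2n+1) + B_(2n+2) = B_n + (t+1) B_(n+1)
   on the left and (t+2) B_(n+1) - B_(n+1) + B_n on the right. *)
lemma stern_poly_sum_double: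
  "(\<Sum>i = 1..2 * n. stern_poly i) = [:2, 1:] * (\<Sum>i = 1..n. stern_poly i) - stern_poly n"
proof (induction n)
  case 0
  then show ?case by simp
next
  case (Suc n)
  have split: "2 * Suc n = Suc (Suc (2 * n))" by simp
  have "(\<Sum>i = 1..2 * Suc n. stern_poly i)
        = (\<Sum>i = 1..2 * n. stern_poly i) + stern_poly (2 * n + 1) + stern_poly (2 * (n + 1))"
    unfolding split by (simp add: add.assoc)
  also have "\<dots> = [:2, 1:] * (\<Sum>i = 1..n. stern_poly i) - stern_poly n
                 + stern_poly n + stern_poly (n + 1) + [:0, 1:] * stern_poly (n + 1)"
    using Suc stern_poly_odd[of n] stern_poly_even[of "n + 1"] by (simp add: numeral_poly)
  also have "\<dots> = [:2, 1:] * (\<Sum>i = 1..Suc n. stern_poly i) - stern_poly (Suc n)"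
    by (simp add: algebra_simps numeral_mult_conv_smult[symmetric] mult.commute)
  finally show ?case .
qed

theorem corollary3p3:
  fixes k :: nat
  shows "smult 2 (\<Sum>i = 1..2 ^ k. stern_poly i) = [:2, 1:] ^ k + [:0, 1:] ^ k"
proof (induction k)
  case 0
  then show ?case by (simp add: numeral_poly)
next
  case (Suc k)
  let ?S = "\<Sum>i = 1..2 ^ k. stern_poly i"
  have "smult 2 (\<Sum>i = 1..2 ^ Suc k. stern_poly i) = smult 2 ([:2, 1:] * ?S - [:0, 1:] ^ k)"
    using stern_poly_sum_double[of "2 ^ k"] by (simp add: stern_poly_power_of_two)
  also have "\<dots> = [:2, 1:] * smult 2 ?S - smult 2 ([:0, 1:] ^ k)"
    by (simp add: smult_diff_right)
  also have "\<dots> = [:2, 1:] * ([:2, 1:] ^ k + [:0, 1:] ^ k) - smult 2 ([:0, 1:] ^ k)"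
    using Suc by simp
  also have "\<dots> = [:2, 1:] ^ Suc k + [:0, 1:] ^ Suc k"
    by (simp add: algebra_simps)
  finally show ?case .
qed

end
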